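(* Let $(x(t),y(t))$ be any solution of the system (FHN-CNN) and set $V_i=x_i-x_{i-1}$, $W_i=y_i-y_{i-1}$ for $1\le i\le n$ (with $x_0=x_n$, $y_0=y_n$). Then for all $t>0$, $$\frac{d}{dt}\sum_{i=1}^n\big(|V_i|^2+|W_i|^2\big)+2\delta\sum_{i=1}^n\big(|V_i|^2+|W_i|^2\big)+4p(x_n-x_1)^2\le 2\sum_{i=1}^n\Big[(\delta+\gamma)|V_i|^2+|c-b|\big(|V_i|^2+|W_i|^2\big)\Big]+2p(x_{n-1}-x_2)^2.$$
   Context: Fix an integer $n\ge 4$ and positive constants $a,b,c,\delta,p$. Let $f\in C^1(\mathbb{R},\mathbb{R})$ satisfy, for some positive constants $\lambda,\beta,\gamma$: $f(s)s\le -\lambda s^4+\beta$ and $f'(s)\le\gamma$ for all $s\in\mathbb{R}$. The FitzHugh–Nagumo cellular neural network with boundary feedback (FHN-CNN) is the ODE system for $t>0$, $1\le i\le n$: $$\frac{dx_i}{dt}=a(x_{i-1}-2x_i+x_{i+1})+f(x_i)-by_i+pu_i,\qquad \frac{dy_i}{dt}=cx_i-\delta y_i,$$ with the periodic convention $x_0=x_n$, $x_{n+1}=x_1$, and the boundary feedback $u_1=u_{n+1}=x_n-x_1$, $u_i=0$ for $2\le i\le n-1$, $u_n=u_0=x_1-x_n$. *)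

theory Defs
  imports "HOL-Analysis.Analysis"
begin

text \<open>States are functions z :: nat => real, meaningful on indices 1..n.
  Periodic convention: z_0 = z_n, z_(n+1) = z_1.\<close>
definition per :: "nat \<Rightarrow> (nat \<Rightarrow> real) \<Rightarrow> nat \<Rightarrow> real" where
  "per n z i = (if i = 0 then z n else if i = n + 1 then z 1 else z i)"

definition fb :: "nat \<Rightarrow> (nat \<Rightarrow> real) \<Rightarrow> nat \<Rightarrow> real" where
  "fb n z i = (if i = 1 \<or> i = n + 1 then z n - z 1
               else if i = n \<or> i = 0 then z 1 - z n else 0)"

definition FHN_solution ::
  "nat \<Rightarrow> real \<Rightarrow> real \<Rightarrow> real \<Rightarrow> real \<Rightarrow> real \<Rightarrow> (real \<Rightarrow> real)
   \<Rightarrow> (real \<Rightarrow> nat \<Rightarrow> real) \<Rightarrow> (real \<Rightarrow> nat \<Rightarrow> real) \<Rightarrow> bool" where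
  "FHN_solution n a b c \<delta> p f x y \<longleftrightarrow>
     (\<forall>t>0. \<forall>i\<in>{1..n}.
        ((\<lambda>s. x s i) has_real_derivative
           (a * (per n (x t) (i - 1) - 2 * x t i + per n (x t) (i + 1))
            + f (x t i) - b * y t i + p * fb n (x t) i)) (at t)
      \<and> ((\<lambda>s. y s i) has_real_derivative (c * x t i - \<delta> * y t i)) (at t))"

end

theory Submission imports Defs begin

text \<open>Differencing commutes with the cyclic coupling, so the differences V, W obey the
  same linear system as x, y, with the nonlinearity entering as f(x_i) - f(x_(i-1)) and
  the feedback as u_i - u_(i-1).  In the energy identity for \<Sum>(V_i^2 + W_i^2) the
  discrete Laplacian contributes a nonpositive term (summation by parts), the
  one-sided bound f' \<le> \<gamma> controls the nonlinearity, the cross terms (c - b) V_i W_i are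
  absorbed by |c - b|(V_i^2 + W_i^2), and the feedback is nonzero only at i = 1, 2, n,
  where it is absorbed by an elementary quadratic inequality.\<close>

definition cyc_pred :: "nat \<Rightarrow> nat \<Rightarrow> nat" where
  "cyc_pred n i = (if i = 1 then n else i - 1)"

definition cyc_succ :: "nat \<Rightarrow> nat \<Rightarrow> nat" where
  "cyc_succ n i = (if i = n then 1 else i + 1)"

definition cyc_diff :: "nat \<Rightarrow> (nat \<Rightarrow> real) \<Rightarrow> nat \<Rightarrow> real" where
  "cyc_diff n z i = z i - z (cyc_pred n i)"

definition cyc_lap :: "nat \<Rightarrow> (nat \<Rightarrow> real) \<Rightarrow> nat \<Rightarrow> real" where
  "cyc_lap n z i = z (cyc_pred n i) - 2 * z i + z (cyc_succ n i)"

definition diff_energy :: "nat \<Rightarrow> (nat \<Rightarrow> real) \<Rightarrow> real" where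
  "diff_energy n z = (\<Sum>i=1..n. (cyc_diff n z i)\<^sup>2)"

lemma cyc_pred_in: "i \<in> {1..n} \<Longrightarrow> cyc_pred n i \<in> {1..n}"
  and cyc_succ_in: "i \<in> {1..n} \<Longrightarrow> cyc_succ n i \<in> {1..n}"
  and cyc_succ_pred: "i \<in> {1..n} \<Longrightarrow> cyc_succ n (cyc_pred n i) = i"
  and cyc_pred_succ: "i \<in> {1..n} \<Longrightarrow> cyc_pred n (cyc_succ n i) = i"
  by (auto simp: cyc_pred_def cyc_succ_def)

lemma bij_betw_cyc_pred: "bij_betw (cyc_pred n) {1..n} {1..n}"
  by (rule bij_betw_byWitness[where f' = "cyc_succ n"])
    (auto simp: cyc_pred_def cyc_succ_def)

lemma bij_betw_cyc_succ: "bij_betw (cyc_succ n) {1..n} {1..n}"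
  by (rule bij_betw_byWitness[where f' = "cyc_pred n"])
    (auto simp: cyc_pred_def cyc_succ_def)

lemma per_minus_one: "i \<in> {1..n} \<Longrightarrow> per n z (i - 1) = z (cyc_pred n i)"
  and per_plus_one: "i \<in> {1..n} \<Longrightarrow> per n z (i + 1) = z (cyc_succ n i)"
  by (auto simp: per_def cyc_pred_def cyc_succ_def)

lemma abs_per_diff_sq:
  "i \<in> {1..n} \<Longrightarrow> \<bar>z i - per n z (i - 1)\<bar>\<^sup>2 = (cyc_diff n z i)\<^sup>2"
  by (simp only: power2_abs cyc_diff_def per_minus_one)

lemma cyc_diff_cyc_lap:
  "i \<in> {1..n} \<Longrightarrow> cyc_diff n (cyc_lap n z) i = cyc_lap n (cyc_diff n z) i"
  by (simp add: cyc_diff_def cyc_lap_def cyc_succ_pred cyc_pred_succ)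

lemma sum_mult_second_difference_nonpos:
  fixes v :: "'a \<Rightarrow> real"
  assumes "bij_betw \<sigma> A A" "bij_betw \<tau> A A"
  shows "(\<Sum>i\<in>A. v i * (v (\<sigma> i) - 2 * v i + v (\<tau> i))) \<le> 0"
proof -
  have "(\<Sum>i\<in>A. v i * (v (\<sigma> i) - 2 * v i + v (\<tau> i)))
      \<le> (\<Sum>i\<in>A. ((v (\<sigma> i))\<^sup>2 + (v (\<tau> i))\<^sup>2) / 2 - (v i)\<^sup>2)"
  proof (rule sum_mono)
    fix i
    show "v i * (v (\<sigma> i) - 2 * v i + v (\<tau> i)) \<le> ((v (\<sigma> i))\<^sup>2 + (v (\<tau> i))\<^sup>2) / 2 - (v i)\<^sup>2"
      using sum_squares_bound[of "v i" "v (\<sigma> i)"] sum_squares_bound[of "v i" "v (\<tau> i)"]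
      by (simp add: algebra_simps power2_eq_square)
  qed
  also have "\<dots> = 0"
    using sum.reindex_bij_betw[OF assms(1), of "\<lambda>i. (v i)\<^sup>2"]
      sum.reindex_bij_betw[OF assms(2), of "\<lambda>i. (v i)\<^sup>2"]
    by (simp add: sum_subtractf sum.distrib sum_divide_distrib[symmetric])
  finally show ?thesis .
qed

lemma sum_mult_cyc_lap_nonpos: "(\<Sum>i=1..n. v i * cyc_lap n v i) \<le> 0"
  unfolding cyc_lap_def
  by (rule sum_mult_second_difference_nonpos[OF bij_betw_cyc_pred bij_betw_cyc_succ])

lemma one_sided_lipschitz:
  fixes f f' :: "real \<Rightarrow> real"
  assumes "\<And>s. (f has_real_derivative f' s) (at s)" and "\<And>s. f' s \<le> \<gamma>"
  shows "(u - v) * (f u - f v) \<le> \<gamma> * (u - v)\<^sup>2"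
proof -
  have mono: "\<gamma> * r - f r \<le> \<gamma> * s - f s" if "r \<le> s" for r s
  proof (rule DERIV_nonneg_imp_nondecreasing[OF that])
    fix z show "\<exists>y. ((\<lambda>s. \<gamma> * s - f s) has_real_derivative y) (at z) \<and> y \<ge> 0"
      by (intro exI[of _ "\<gamma> - f' z"] conjI derivative_eq_intros assms(1)) (auto simp: assms)
  qed
  show ?thesis
  proof (cases "v \<le> u")
    case True
    with mono[OF this] mult_left_mono[of "f u - f v" "\<gamma> * (u - v)" "u - v"]
    show ?thesis by (simp add: power2_eq_square algebra_simps)
  next
    case False
    with mono[of u v] mult_left_mono[of "f v - f u" "\<gamma> * (v - u)" "v - u"]
    show ?thesis by (simp add: power2_eq_square algebra_simps)
  qed
qed

lemma mult_mult_le_abs_sum_squares: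
  fixes k v w :: real
  shows "k * (v * w) \<le> \<bar>k\<bar> * (v\<^sup>2 + w\<^sup>2)"
proof -
  have "2 * \<bar>v\<bar> * \<bar>w\<bar> \<le> v\<^sup>2 + w\<^sup>2"
    using sum_squares_bound[of "\<bar>v\<bar>" "\<bar>w\<bar>"] by simp
  moreover have "0 \<le> \<bar>v\<bar> * \<bar>w\<bar>"
    by simp
  ultimately have "\<bar>v * w\<bar> \<le> v\<^sup>2 + w\<^sup>2"
    unfolding abs_mult by linarith
  then have "\<bar>k\<bar> * \<bar>v * w\<bar> \<le> \<bar>k\<bar> * (v\<^sup>2 + w\<^sup>2)"
    by (rule mult_left_mono) simp
  then show ?thesis
    by (metis abs_ge_self abs_mult order_trans)
qed

lemma sum_cyc_diff_feedback:
  assumes "n \<ge> 4"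
  shows "(\<Sum>i=1..n. cyc_diff n z i * cyc_diff n (fb n z) i)
           = (z 1 - z n) * ((z 2 - z (n - 1)) - 3 * (z 1 - z n))"
proof -
  have "(\<Sum>i=1..n. cyc_diff n z i * cyc_diff n (fb n z) i)
      = (\<Sum>i\<in>{1, 2, n}. cyc_diff n z i * cyc_diff n (fb n z) i)"
    \<comment> \<open>u_i - u_(i-1) vanishes away from the boundary indices 1, 2, n\<close>
    by (rule sum.mono_neutral_right)
      (use assms in \<open>auto simp: cyc_diff_def fb_def cyc_pred_def\<close>)
  also have "\<dots> = (z 1 - z n) * ((z 2 - z (n - 1)) - 3 * (z 1 - z n))"
    using assms by (auto simp: cyc_diff_def fb_def cyc_pred_def algebra_simps)
  finally show ?thesis .
qed

lemma sum_cyc_diff_feedback_le: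
  assumes "n \<ge> 4"
  shows "(\<Sum>i=1..n. cyc_diff n z i * cyc_diff n (fb n z) i) + 2 * (z n - z 1)\<^sup>2
           \<le> (z (n - 1) - z 2)\<^sup>2"
proof -
  define u where "u = z 1 - z n"
  define w where "w = z 2 - z (n - 1)"
  have "u * (w - 3 * u) + 2 * u\<^sup>2 = u * w - u\<^sup>2"
    by (simp add: power2_eq_square algebra_simps)
  also have "\<dots> \<le> w\<^sup>2"
    using sum_squares_bound[of u w] zero_le_power2[of u] zero_le_power2[of w] by linarith
  finally have "u * (w - 3 * u) + 2 * u\<^sup>2 \<le> w\<^sup>2" .
  moreover have "(z n - z 1)\<^sup>2 = u\<^sup>2" "(z (n - 1) - z 2)\<^sup>2 = w\<^sup>2"
    unfolding u_def w_def by (simp_all add: power2_commute)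
  ultimately show ?thesis
    unfolding sum_cyc_diff_feedback[OF assms] u_def[symmetric] w_def[symmetric] by simp
qed

lemma diff_energy_has_derivative:
  assumes "\<And>i. i \<in> {1..n} \<Longrightarrow> ((\<lambda>s. z s i) has_real_derivative Z i) (at t)"
  shows "((\<lambda>s. diff_energy n (z s)) has_real_derivative
           2 * (\<Sum>i=1..n. cyc_diff n (z t) i * cyc_diff n Z i)) (at t)"
  unfolding diff_energy_def sum_distrib_left
proof (rule DERIV_sum)
  fix i assume i: "i \<in> {1..n}"
  show "((\<lambda>s. (cyc_diff n (z s) i)\<^sup>2) has_real_derivative
          2 * (cyc_diff n (z t) i * cyc_diff n Z i)) (at t)"
    unfolding cyc_diff_def
    by (rule derivative_eq_intros assms i cyc_pred_in[OF i] refl)+ (simp add: algebra_simps)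
qed

lemma FHN_diff_energy_has_derivative:
  assumes "FHN_solution n a b c \<delta> p f x y" "t > 0"
  defines "V \<equiv> cyc_diff n (x t)" and "W \<equiv> cyc_diff n (y t)"
  shows "((\<lambda>s. diff_energy n (x s) + diff_energy n (y s)) has_real_derivative
           2 * a * (\<Sum>i=1..n. V i * cyc_lap n V i)
           + 2 * (\<Sum>i=1..n. V i * (f (x t i) - f (x t (cyc_pred n i))))
           + 2 * (c - b) * (\<Sum>i=1..n. V i * W i)
           - 2 * \<delta> * (\<Sum>i=1..n. (W i)\<^sup>2)
           + 2 * p * (\<Sum>i=1..n. V i * cyc_diff n (fb n (x t)) i)) (at t)"
proof -
  define Dx where "Dx j = a * cyc_lap n (x t) j + f (x t j) - b * y t j + p * fb n (x t) j" for j
  define Dy where "Dy j = c * x t j - \<delta> * y t j" for j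
  have "((\<lambda>s. x s i) has_real_derivative Dx i) (at t)
      \<and> ((\<lambda>s. y s i) has_real_derivative Dy i) (at t)" if i: "i \<in> {1..n}" for i
    using assms(1)[unfolded FHN_solution_def, rule_format, OF assms(2) i]
    unfolding Dx_def Dy_def cyc_lap_def per_minus_one[OF i] per_plus_one[OF i] .
  then have deriv: "((\<lambda>s. diff_energy n (x s) + diff_energy n (y s)) has_real_derivative
      2 * (\<Sum>i=1..n. V i * cyc_diff n Dx i) + 2 * (\<Sum>i=1..n. W i * cyc_diff n Dy i)) (at t)"
    unfolding V_def W_def by (intro DERIV_add diff_energy_has_derivative) auto
  have Sx: "(\<Sum>i=1..n. V i * cyc_diff n Dx i)
      = a * (\<Sum>i=1..n. V i * cyc_lap n V i)
        + (\<Sum>i=1..n. V i * (f (x t i) - f (x t (cyc_pred n i))))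
        - b * (\<Sum>i=1..n. V i * W i) + p * (\<Sum>i=1..n. V i * cyc_diff n (fb n (x t)) i)"
  proof -
    have Dx_diff: "cyc_diff n Dx i = a * cyc_lap n V i + (f (x t i) - f (x t (cyc_pred n i)))
        - b * W i + p * cyc_diff n (fb n (x t)) i" if "i \<in> {1..n}" for i
      using cyc_diff_cyc_lap[OF that, of "x t"]
      by (simp add: Dx_def V_def W_def cyc_diff_def algebra_simps)
    have "(\<Sum>i=1..n. V i * cyc_diff n Dx i)
        = (\<Sum>i=1..n. a * (V i * cyc_lap n V i) + V i * (f (x t i) - f (x t (cyc_pred n i)))
            - b * (V i * W i) + p * (V i * cyc_diff n (fb n (x t)) i))"
      by (intro sum.cong refl) (simp add: Dx_diff algebra_simps)
    then show ?thesis
      by (simp add: sum.distrib sum_subtractf sum_distrib_left)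
  qed
  have Sy: "(\<Sum>i=1..n. W i * cyc_diff n Dy i)
      = c * (\<Sum>i=1..n. V i * W i) - \<delta> * (\<Sum>i=1..n. (W i)\<^sup>2)"
  proof -
    have Dy_diff: "cyc_diff n Dy i = c * V i - \<delta> * W i" for i
      by (simp add: Dy_def V_def W_def cyc_diff_def algebra_simps)
    show ?thesis
      by (simp add: Dy_diff sum_subtractf sum_distrib_left power2_eq_square algebra_simps)
  qed
  show ?thesis
    by (rule DERIV_cong[OF deriv]) (unfold Sx Sy, simp add: algebra_simps)
qed

lemma FHN_diff_energy_estimate:
  fixes x y :: "real \<Rightarrow> nat \<Rightarrow> real"
  assumes "n \<ge> 4" "a \<ge> 0" "p \<ge> 0"
    and "\<And>s. (f has_real_derivative f' s) (at s)" "\<And>s. f' s \<le> \<gamma>"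
    and "FHN_solution n a b c \<delta> p f x y" "t > 0"
  defines "E \<equiv> \<lambda>s. diff_energy n (x s) + diff_energy n (y s)"
  shows "deriv E t + 2 * \<delta> * E t + 4 * p * (x t n - x t 1)\<^sup>2
           \<le> 2 * ((\<delta> + \<gamma>) * diff_energy n (x t) + \<bar>c - b\<bar> * E t)
             + 2 * p * (x t (n - 1) - x t 2)\<^sup>2"
proof -
  define V where "V = cyc_diff n (x t)"
  define W where "W = cyc_diff n (y t)"
  have deriv_E: "deriv E t = 2 * a * (\<Sum>i=1..n. V i * cyc_lap n V i)
      + 2 * (\<Sum>i=1..n. V i * (f (x t i) - f (x t (cyc_pred n i))))
      + 2 * (c - b) * (\<Sum>i=1..n. V i * W i) - 2 * \<delta> * diff_energy n (y t)
      + 2 * p * (\<Sum>i=1..n. V i * cyc_diff n (fb n (x t)) i)"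
    unfolding E_def V_def W_def diff_energy_def[of n "y t"]
    by (rule DERIV_imp_deriv[OF FHN_diff_energy_has_derivative[OF assms(6,7)]])
  have "a * (\<Sum>i=1..n. V i * cyc_lap n V i) \<le> 0"
    by (rule mult_nonneg_nonpos[OF assms(2) sum_mult_cyc_lap_nonpos])
  moreover have "(\<Sum>i=1..n. V i * (f (x t i) - f (x t (cyc_pred n i))))
      \<le> \<gamma> * diff_energy n (x t)"
    unfolding V_def diff_energy_def sum_distrib_left cyc_diff_def
    by (rule sum_mono) (rule one_sided_lipschitz[OF assms(4,5)])
  moreover have "(c - b) * (\<Sum>i=1..n. V i * W i) \<le> \<bar>c - b\<bar> * E t"
    unfolding E_def V_def W_def diff_energy_def sum.distrib[symmetric] sum_distrib_left
    by (rule sum_mono) (rule mult_mult_le_abs_sum_squares)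
  moreover have "p * (\<Sum>i=1..n. V i * cyc_diff n (fb n (x t)) i) + 2 * p * (x t n - x t 1)\<^sup>2
      \<le> p * (x t (n - 1) - x t 2)\<^sup>2"
    using mult_left_mono[OF sum_cyc_diff_feedback_le[OF assms(1), of "x t"] assms(3)]
    by (simp add: V_def algebra_simps)
  ultimately show ?thesis
    unfolding deriv_E by (simp add: E_def algebra_simps)
qed

theorem mainTheorem4:
  fixes n :: nat and a b c \<delta> p lam \<beta> \<gamma> :: real
    and f f' :: "real \<Rightarrow> real" and x y :: "real \<Rightarrow> nat \<Rightarrow> real"
  assumes "n \<ge> 4"
    and "a > 0" "b > 0" "c > 0" "\<delta> > 0" "p > 0"
    and "lam > 0" "\<beta> > 0" "\<gamma> > 0"
    and "\<And>s. (f has_real_derivative f' s) (at s)"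
    and "continuous_on UNIV f'"
    and "\<And>s. f s * s \<le> - lam * s ^ 4 + \<beta>"
    and "\<And>s. f' s \<le> \<gamma>"
    and "FHN_solution n a b c \<delta> p f x y"
    and "t > 0"
  shows "(\<lambda>s. \<Sum>i=1..n. \<bar>x s i - per n (x s) (i - 1)\<bar>^2 + \<bar>y s i - per n (y s) (i - 1)\<bar>^2)
           differentiable (at t)
       \<and> deriv (\<lambda>s. \<Sum>i=1..n. \<bar>x s i - per n (x s) (i - 1)\<bar>^2 + \<bar>y s i - per n (y s) (i - 1)\<bar>^2) t
         + 2 * \<delta> * (\<Sum>i=1..n. \<bar>x t i - per n (x t) (i - 1)\<bar>^2 + \<bar>y t i - per n (y t) (i - 1)\<bar>^2)
         + 4 * p * (x t n - x t 1)^2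
       \<le> 2 * (\<Sum>i=1..n. (\<delta> + \<gamma>) * \<bar>x t i - per n (x t) (i - 1)\<bar>^2
                 + \<bar>c - b\<bar> * (\<bar>x t i - per n (x t) (i - 1)\<bar>^2 + \<bar>y t i - per n (y t) (i - 1)\<bar>^2))
         + 2 * p * (x t (n - 1) - x t 2)^2"
proof -
  have energy: "(\<Sum>i=1..n. \<bar>x s i - per n (x s) (i - 1)\<bar>^2 + \<bar>y s i - per n (y s) (i - 1)\<bar>^2)
      = diff_energy n (x s) + diff_energy n (y s)" for s
    unfolding diff_energy_def sum.distrib[symmetric]
    by (intro sum.cong refl) (simp only: abs_per_diff_sq)
  have rhs: "(\<Sum>i=1..n. (\<delta> + \<gamma>) * \<bar>x t i - per n (x t) (i - 1)\<bar>^2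
      + \<bar>c - b\<bar> * (\<bar>x t i - per n (x t) (i - 1)\<bar>^2 + \<bar>y t i - per n (y t) (i - 1)\<bar>^2))
      = (\<delta> + \<gamma>) * diff_energy n (x t) + \<bar>c - b\<bar> * (diff_energy n (x t) + diff_energy n (y t))"
    unfolding diff_energy_def sum.distrib[symmetric] sum_distrib_left
    by (intro sum.cong refl) (simp only: abs_per_diff_sq)
  have "(\<lambda>s. diff_energy n (x s) + diff_energy n (y s)) differentiable (at t)"
    using FHN_diff_energy_has_derivative[OF assms(14,15)] real_differentiable_def by blast
  \<comment> \<open>only the one-sided bound f' \<le> \<gamma> on f enters\<close>
  with FHN_diff_energy_estimate[OF assms(1) _ _ assms(10,13,14,15)] assms(2,6)
  show ?thesis
    unfolding energy rhs by simp
qed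

end
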